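(* Let $h>0$, $n\in\mathbb{N}$, and let $\lambda:\mathbb{T}\to\mathbb{R}$ be an $n$-cycle with values $\lambda_0,\dots,\lambda_{n-1}\in\mathbb{R}\setminus\{\pm\tfrac1h\}$, such that $0<|e_{\lambda}(nh)|\neq1$ and $0<|e_{-\lambda}(nh)|\neq1$. Define for $t\in\mathbb{T}$ $$p(t)=-\lambda(t+2h),\quad q(t)=\Delta_h\lambda(t+h)-\lambda(t+h)\lambda(t+2h),$$ $$r(t)=\Delta_h^2\lambda(t)-\lambda(t+h)\Delta_h\lambda(t+h)-\bigl(\lambda(t+h)+\lambda(t+2h)\bigr)\Delta_h\lambda(t)+\lambda(t)\lambda(t+h)\lambda(t+2h).$$ Then the third-order equation $$\Delta_h^3y(t)+p(t)\Delta_h^2y(t)+q(t)\Delta_h y(t)+r(t)y(t)=0,\qquad t\in\mathbb{T},$$ has Hyers–Ulam stability on $\mathbb{T}$ with Hyers–Ulam stability constant $K=\bigl(K_0(\lambda)\bigr)^2K_0(-\lambda)$.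
   Context: Fix $h>0$ and let $\mathbb{T}=\{0,h,2h,3h,\dots\}$. For $x:\mathbb{T}\to\mathbb{R}$, $\Delta_h x(t)=\frac{x(t+h)-x(t)}{h}$ and $\Delta_h^2x=\Delta_h(\Delta_h x)$, $\Delta_h^3x=\Delta_h(\Delta_h^2 x)$. An $n$-cycle is a function $\mu:\mathbb{T}\to\mathbb{R}$ with $\mu(t)=\mu_k$ whenever $t/h\equiv k\pmod n$, $k\in\{0,\dots,n-1\}$, which has period $n$ and no smaller period. For such $\mu$ define the discrete exponential $e_\mu(t)=\prod_{k=0}^{t/h-1}(1+h\mu(kh))$ (empty product $=1$), so $e_\mu(nh)=\prod_{k=0}^{n-1}(1+h\mu_k)$. For $k\in\{0,\dots,n-1\}$ define $$S_k(\mu)=\sum_{j=1}^{n}\prod_{i=0}^{j-1}\frac{1}{|1+h\mu_{(k+i)\bmod n}|},$$ (e.g. $S_0(\mu)=\frac{1}{|1+h\mu_0|}+\frac{1}{|1+h\mu_0||1+h\mu_1|}+\dots+\frac{1}{|1+h\mu_0|\cdots|1+h\mu_{n-1}|}$), and, when $0<|e_\mu(nh)|\neq1$, $$K_0(\mu)=\frac{h|e_\mu(nh)|}{\bigl|1-|e_\mu(nh)|\bigr|}\max\{S_0(\mu),\dots,S_{n-1}(\mu)\}.$$ Here $-\lambda$ denotes the $n$-cycle with values $-\lambda_0,\dots,-\lambda_{n-1}$. Hyers–Ulam stability: an equation $\mathcal{L}[y](t)=f(t)$, $t\in\mathbb{T}$ (with $\mathcal{L}$ a linear difference operator) has Hyers–Ulam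 stability on $\mathbb{T}$ with Hyers–Ulam stability constant $K>0$ if for every $\varepsilon>0$ and every $\xi:\mathbb{T}\to\mathbb{R}$ with $|\mathcal{L}[\xi](t)-f(t)|\le\varepsilon$ for all $t\in\mathbb{T}$, there is a solution $y:\mathbb{T}\to\mathbb{R}$ of the equation with $|\xi(t)-y(t)|\le K\varepsilon$ for all $t\in\mathbb{T}$. The minimum Hyers–Ulam stability constant is the smallest such $K$. *)

theory Defs
  imports Complex_Main
begin

text \<open>The time scale T = {0, h, 2h, ...} is indexed by nat: the point t = k*h
  corresponds to index k. Functions on T are functions nat \<Rightarrow> real.\<close>

definition dlt :: "real \<Rightarrow> (nat \<Rightarrow> real) \<Rightarrow> nat \<Rightarrow> real" where
  "dlt h x k = (x (Suc k) - x k) / h"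

definition is_cycle :: "nat \<Rightarrow> (nat \<Rightarrow> real) \<Rightarrow> bool" where
  "is_cycle n \<mu> \<longleftrightarrow> n \<ge> 1 \<and> (\<forall>k. \<mu> (k + n) = \<mu> k) \<and>
     (\<forall>m. 0 < m \<and> m < n \<longrightarrow> \<not> (\<forall>k. \<mu> (k + m) = \<mu> k))"

definition dexp :: "real \<Rightarrow> (nat \<Rightarrow> real) \<Rightarrow> nat \<Rightarrow> real" where
  "dexp h \<mu> k = (\<Prod>i<k. 1 + h * \<mu> i)"

definition Sk :: "real \<Rightarrow> nat \<Rightarrow> (nat \<Rightarrow> real) \<Rightarrow> nat \<Rightarrow> real" where
  "Sk h n \<mu> k = (\<Sum>j=1..n. \<Prod>i<j. 1 / \<bar>1 + h * \<mu> ((k + i) mod n)\<bar>)"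

definition K0 :: "real \<Rightarrow> nat \<Rightarrow> (nat \<Rightarrow> real) \<Rightarrow> real" where
  "K0 h n \<mu> = h * \<bar>dexp h \<mu> n\<bar> / \<bar>1 - \<bar>dexp h \<mu> n\<bar>\<bar>
      * Max (Sk h n \<mu> ` {..<n})"

definition hu_stable :: "((nat \<Rightarrow> real) \<Rightarrow> nat \<Rightarrow> real) \<Rightarrow> (nat \<Rightarrow> real) \<Rightarrow> real \<Rightarrow> bool" where
  "hu_stable L f K \<longleftrightarrow> K > 0 \<and>
     (\<forall>\<epsilon>>0. \<forall>\<xi>. (\<forall>t. \<bar>L \<xi> t - f t\<bar> \<le> \<epsilon>) \<longrightarrow>
        (\<exists>y. (\<forall>t. L y t = f t) \<and> (\<forall>t. \<bar>\<xi> t - y t\<bar> \<le> K * \<epsilon>)))"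

end

theory Submission imports Defs begin

text \<open>Put \<open>D\<^sub>\<mu> y = \<Delta>\<^sub>h y - \<mu> y\<close>. The operator of the equation factors as
  \<open>D\<^sub>c \<circ> D\<^sub>b \<circ> D\<^sub>a\<close> with \<open>a = -\<lambda>\<close>, \<open>b = \<lambda>(\<cdot> + h)\<close>, \<open>c = \<lambda>(\<cdot> + 2h)\<close>, and
  Hyers--Ulam constants multiply under composition. Multiplied by \<open>h\<close>, the first-order
  equation \<open>D\<^sub>\<mu> y = f\<close> is the recurrence \<open>y(t + h) = (1 + h\<mu>(t)) y(t) + h f(t)\<close>, whose
  coefficient product over one period is \<open>e\<^sub>\<mu>(nh)\<close>. If \<open>|e\<^sub>\<mu>(nh)| < 1\<close>, the exact
  solution with the same initial value as an approximate one stays within \<open>K\<^sub>0(\<mu>) \<epsilon>\<close>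
  of it by a forward estimate; if \<open>|e\<^sub>\<mu>(nh)| > 1\<close>, the approximate solution is
  corrected by the convergent backward series of its defects. Shifting \<open>\<lambda>\<close> changes
  neither \<open>e\<^sub>\<lambda>(nh)\<close> nor \<open>K\<^sub>0(\<lambda>)\<close>.\<close>

lemma periodic_add_mult:
  fixes a :: "nat \<Rightarrow> 'a" and m :: nat
  assumes "\<And>k. a (k + n) = a k"
  shows "a (k + m * n) = a k"
proof (induction m)
  case (Suc m)
  have "a (k + Suc m * n) = a ((k + m * n) + n)" by (simp add: ac_simps)
  then show ?case using assms[of "k + m * n"] Suc by simp
qed simp

lemma periodic_mod:
  fixes a :: "nat \<Rightarrow> 'a"
  assumes "\<And>k. a (k + n) = a k"
  shows "a k = a (k mod n)"
  using periodic_add_mult[of a n "k mod n" "k div n", OF assms] by (simp add: add.commute)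

lemma range_periodic_shift:
  fixes S :: "nat \<Rightarrow> 'a"
  assumes "n \<ge> 1" and "\<And>k. S (k + n) = S k"
  shows "range (\<lambda>k. S (k + s)) = range S"
proof (intro equalityI subsetI)
  fix v assume "v \<in> range S"
  then obtain k where "v = S k" by auto
  moreover have "k + s * n = (k + s * n - s) + s" using \<open>n \<ge> 1\<close> by (simp add: trans_le_add2)
  ultimately have "v = S ((k + s * n - s) + s)"
    using periodic_add_mult[of S n k s, OF assms(2)] by metis
  then show "v \<in> range (\<lambda>k. S (k + s))" by blast
qed auto

definition segprod :: "(nat \<Rightarrow> real) \<Rightarrow> nat \<Rightarrow> nat \<Rightarrow> real" where
  "segprod a k m = (\<Prod>i<m. a (k + i))"

lemma segprod_0 [simp]: "segprod a k 0 = 1"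
  by (simp add: segprod_def)

lemma segprod_Suc: "segprod a k (Suc m) = segprod a k m * a (k + m)"
  by (simp add: segprod_def)

lemma segprod_Suc_shift: "segprod a k (Suc m) = a k * segprod a (Suc k) m"
  unfolding segprod_def by (subst prod.lessThan_Suc_shift) simp

lemma segprod_add: "segprod a k (m + l) = segprod a k m * segprod a (k + m) l"
  by (induction l) (simp_all add: segprod_def add.assoc)

lemma segprod_nonzero: "(\<And>k. a k \<noteq> 0) \<Longrightarrow> segprod a k m \<noteq> 0"
  by (simp add: segprod_def)

lemma segprod_add_periods:
  assumes "\<And>k. a (k + n) = a k"
  shows "segprod a (k + m * n) j = segprod a k j"
proof -
  have "a (k + m * n + i) = a (k + i)" for i
    using periodic_add_mult[of a n "k + i" m, OF assms] by (simp add: ac_simps)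
  then show ?thesis unfolding segprod_def by simp
qed

lemma segprod_period:
  assumes per: "\<And>k. a (k + n) = a k" and nz: "\<And>k. a k \<noteq> 0"
  shows "segprod a k n = segprod a 0 n"
proof (induction k)
  case (Suc k)
  have "a k * segprod a (Suc k) n = segprod a k n * a k"
    using per[of k] by (simp add: segprod_Suc_shift[symmetric] segprod_Suc add.commute)
  then show ?case using Suc nz[of k] by simp
qed simp

definition inv_segprod_sum :: "(nat \<Rightarrow> real) \<Rightarrow> nat \<Rightarrow> nat \<Rightarrow> real" where
  "inv_segprod_sum a n k = (\<Sum>j<n. 1 / \<bar>segprod a k (Suc j)\<bar>)"

lemma inv_segprod_sum_nonneg: "inv_segprod_sum a n k \<ge> 0"
  by (simp add: inv_segprod_sum_def sum_nonneg)

lemma inv_segprod_sum_periodic: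
  assumes "\<And>k. a (k + n) = a k"
  shows "inv_segprod_sum a n (k + n) = inv_segprod_sum a n k"
  using segprod_add_periods[of a n k 1, OF assms] by (simp add: inv_segprod_sum_def)

lemma inv_segprod_sum_Suc:
  assumes per: "\<And>k. a (k + n) = a k" and nz: "\<And>k. a k \<noteq> 0"
  shows "\<bar>a k\<bar> * inv_segprod_sum a n k + 1 / \<bar>segprod a 0 n\<bar> = 1 + inv_segprod_sum a n (Suc k)"
proof -
  define g where "g j = 1 / \<bar>segprod a (Suc k) j\<bar>" for j
  have "\<bar>a k\<bar> * inv_segprod_sum a n k = (\<Sum>j<n. g j)"
    unfolding inv_segprod_sum_def g_def sum_distrib_left
    using nz[of k] by (simp add: segprod_Suc_shift abs_mult)
  moreover have "g n = 1 / \<bar>segprod a 0 n\<bar>"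
    unfolding g_def using segprod_period[where a=a and n=n, OF per nz, of "Suc k"] by simp
  moreover have "(\<Sum>j<Suc n. g j) = 1 + inv_segprod_sum a n (Suc k)"
    by (subst sum.lessThan_Suc_shift) (simp add: g_def inv_segprod_sum_def)
  ultimately show ?thesis by simp
qed

lemma sums_geometric_blocks:
  fixes f :: "nat \<Rightarrow> real"
  assumes n: "n \<ge> 1" and nonneg: "\<And>i. f i \<ge> 0" and rec: "\<And>i. f (i + n) = r * f i"
    and r: "0 \<le> r" "r < 1"
  shows "f sums ((\<Sum>i<n. f i) / (1 - r))"
proof -
  define F where "F = (\<Sum>i<n. f i)"
  have "F \<ge> 0" unfolding F_def by (simp add: nonneg sum_nonneg)
  have bound: "sum f {..<N} \<le> F / (1 - r)" for N
  proof (induction N rule: less_induct)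
    case (less N)
    show ?case
    proof (cases "N \<le> n")
      case True
      have "sum f {..<N} \<le> F"
        unfolding F_def by (rule sum_mono2) (use True nonneg in auto)
      also have "F \<le> F / (1 - r)" using \<open>F \<ge> 0\<close> r by (simp add: le_divide_eq mult_left_le)
      finally show ?thesis .
    next
      case False
      have "sum f {..<n + m} = F + (\<Sum>i<m. f (i + n))" for m
        unfolding F_def by (induction m) (simp_all add: ac_simps)
      from this[of "N - n"] False have "sum f {..<N} = F + (\<Sum>i<N - n. f (i + n))" by simp
      also have "\<dots> = F + r * sum f {..<N - n}" by (simp add: rec sum_distrib_left)
      also have "\<dots> \<le> F + r * (F / (1 - r))"
        using less[of "N - n"] False n r by (intro add_left_mono mult_left_mono) auto
      also have "\<dots> = F / (1 - r)" using r by (simp add: field_simps)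
      finally show ?thesis .
    qed
  qed
  have s: "summable f" by (rule summableI_nonneg_bounded[OF nonneg bound])
  have "suminf f = r * suminf f + F"
    using suminf_split_initial_segment[OF s, of n] by (simp add: rec suminf_mult[OF s] F_def)
  then have "suminf f = F / (1 - r)" using r by (simp add: field_simps)
  then show ?thesis using s unfolding F_def by (simp add: sums_iff)
qed

lemma sums_inv_segprod:
  assumes n: "n \<ge> 1" and per: "\<And>k. a (k + n) = a k" and nz: "\<And>k. a k \<noteq> 0"
    and E: "\<bar>segprod a 0 n\<bar> > 1"
  shows "(\<lambda>i. 1 / \<bar>segprod a k (Suc i)\<bar>) sums
           (\<bar>segprod a 0 n\<bar> * inv_segprod_sum a n k / (\<bar>segprod a 0 n\<bar> - 1))"
proof -
  let ?E = "\<bar>segprod a 0 n\<bar>"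
  have step: "1 / \<bar>segprod a k (Suc (i + n))\<bar> = (1 / ?E) * (1 / \<bar>segprod a k (Suc i)\<bar>)" for i
    using segprod_add[of a k "Suc i" n] segprod_period[where a=a and n=n, OF per nz, of "k + Suc i"]
    by (simp add: abs_mult)
  have "(\<lambda>i. 1 / \<bar>segprod a k (Suc i)\<bar>) sums (inv_segprod_sum a n k / (1 - 1 / ?E))"
    using sums_geometric_blocks[where f="\<lambda>i. 1 / \<bar>segprod a k (Suc i)\<bar>", OF n _ step] E
    by (simp add: inv_segprod_sum_def)
  moreover have "inv_segprod_sum a n k / (1 - 1 / ?E) = ?E * inv_segprod_sum a n k / (?E - 1)"
    using E by (simp add: field_simps)
  ultimately show ?thesis by simp
qed

lemma recurrence_stable_contracting:
  assumes per: "\<And>k. a (k + n) = a k" and nz: "\<And>k. a k \<noteq> 0"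
    and E: "\<bar>segprod a 0 n\<bar> < 1" and defect: "\<And>k. \<bar>x (Suc k) - a k * x k\<bar> \<le> \<delta>"
  shows "\<exists>y. (\<forall>k. y (Suc k) = a k * y k) \<and>
    (\<forall>k. \<bar>x k - y k\<bar> \<le> \<delta> * \<bar>segprod a 0 n\<bar> * inv_segprod_sum a n k / (1 - \<bar>segprod a 0 n\<bar>))"
proof -
  define E where "E = \<bar>segprod a 0 n\<bar>"
  let ?S = "inv_segprod_sum a n"
  define y where "y k = x 0 * segprod a 0 k" for k
  have y_Suc: "y (Suc k) = a k * y k" for k by (simp add: y_def segprod_Suc)
  have "\<delta> \<ge> 0" using defect[of 0] by linarith
  have "E > 0" "E < 1" using segprod_nonzero[OF nz] E by (simp_all add: E_def)
  have "\<bar>x k - y k\<bar> \<le> \<delta> * E * ?S k / (1 - E)" for k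
  proof (induction k)
    case 0
    show ?case using \<open>\<delta> \<ge> 0\<close> \<open>E < 1\<close> \<open>E > 0\<close> inv_segprod_sum_nonneg[of a n 0] by (simp add: y_def)
  next
    case (Suc k)
    have "x (Suc k) - y (Suc k) = a k * (x k - y k) + (x (Suc k) - a k * x k)"
      by (simp add: y_Suc algebra_simps)
    then have "\<bar>x (Suc k) - y (Suc k)\<bar> \<le> \<bar>a k\<bar> * \<bar>x k - y k\<bar> + \<delta>"
      using defect[of k] by (metis abs_mult abs_triangle_ineq add_left_mono order_trans)
    also have "\<dots> \<le> \<bar>a k\<bar> * (\<delta> * E * ?S k / (1 - E)) + \<delta>"
      using Suc by (intro add_right_mono mult_left_mono) auto
    also have "\<dots> = \<delta> * (E * (\<bar>a k\<bar> * ?S k) + 1 - E) / (1 - E)"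
      using \<open>E < 1\<close> by (simp add: field_simps)
    also have "E * (\<bar>a k\<bar> * ?S k) + 1 - E = E * ?S (Suc k)"
      using inv_segprod_sum_Suc[where a=a and n=n, OF per nz, of k] \<open>E > 0\<close>
      unfolding E_def[symmetric] by (simp add: field_simps)
    finally show ?case by (simp add: mult.assoc)
  qed
  with y_Suc show ?thesis unfolding E_def by blast
qed

lemma recurrence_stable_expanding:
  assumes n: "n \<ge> 1" and per: "\<And>k. a (k + n) = a k" and nz: "\<And>k. a k \<noteq> 0"
    and E: "\<bar>segprod a 0 n\<bar> > 1" and defect: "\<And>k. \<bar>x (Suc k) - a k * x k\<bar> \<le> \<delta>"
  shows "\<exists>y. (\<forall>k. y (Suc k) = a k * y k) \<and>
    (\<forall>k. \<bar>x k - y k\<bar> \<le> \<delta> * \<bar>segprod a 0 n\<bar> * inv_segprod_sum a n k / (\<bar>segprod a 0 n\<bar> - 1))"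
proof -
  let ?E = "\<bar>segprod a 0 n\<bar>" and ?S = "inv_segprod_sum a n"
  define g where "g j = x (Suc j) - a j * x j" for j
  define u where "u k i = g (k + i) / segprod a k (Suc i)" for k i
  have weights: "(\<lambda>i. 1 / \<bar>segprod a k (Suc i)\<bar>) sums (?E * ?S k / (?E - 1))" for k
    by (rule sums_inv_segprod[OF n per nz E])
  have u_le: "norm (u k i) \<le> \<delta> * (1 / \<bar>segprod a k (Suc i)\<bar>)" for k i
    unfolding u_def g_def using defect[of "k + i"]
    by (simp add: abs_divide divide_right_mono)
  have weights_summable: "summable (\<lambda>i. \<delta> * (1 / \<bar>segprod a k (Suc i)\<bar>))" for k
    using weights by (intro summable_mult) (simp add: sums_iff)
  have u_summable: "summable (u k)" for k
    by (rule summable_comparison_test[OF _ weights_summable]) (use u_le in blast)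
  define z where "z k = suminf (u k)" for k
  have z_le: "\<bar>z k\<bar> \<le> \<delta> * ?E * ?S k / (?E - 1)" for k
  proof -
    have "norm (z k) \<le> (\<Sum>i. \<delta> * (1 / \<bar>segprod a k (Suc i)\<bar>))"
      unfolding z_def by (rule norm_suminf_le[OF u_le weights_summable])
    also have "\<dots> = \<delta> * (\<Sum>i. 1 / \<bar>segprod a k (Suc i)\<bar>)"
      using weights[of k] by (intro suminf_mult) (simp add: sums_iff)
    also have "\<dots> = \<delta> * (?E * ?S k / (?E - 1))"
      using weights[of k] by (simp add: sums_iff)
    finally show ?thesis by simp
  qed
  have z_Suc: "a k * z k = g k + z (Suc k)" for k
  proof -
    have "u k (Suc i) = u (Suc k) i / a k" for i
      unfolding u_def using segprod_Suc_shift[of a k "Suc i"] by simp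
    then have "z k = u k 0 + z (Suc k) / a k"
      using suminf_split_head[OF u_summable[of k]] suminf_divide[OF u_summable[of "Suc k"]]
      unfolding z_def by simp
    moreover have "u k 0 = g k / a k" by (simp add: u_def segprod_def)
    ultimately show ?thesis using nz[of k] by (simp add: field_simps)
  qed
  define y where "y k = x k + z k" for k
  have "y (Suc k) = a k * y k" for k using z_Suc[of k] by (simp add: y_def g_def algebra_simps)
  moreover have "\<bar>x k - y k\<bar> \<le> \<delta> * ?E * ?S k / (?E - 1)" for k
    using z_le[of k] by (simp add: y_def)
  ultimately show ?thesis by blast
qed

lemma recurrence_stable:
  assumes n: "n \<ge> 1" and per: "\<And>k. a (k + n) = a k" and nz: "\<And>k. a k \<noteq> 0"
    and E: "\<bar>segprod a 0 n\<bar> \<noteq> 1" and defect: "\<And>k. \<bar>x (Suc k) - a k * x k\<bar> \<le> \<delta>"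
  shows "\<exists>y. (\<forall>k. y (Suc k) = a k * y k) \<and>
    (\<forall>k. \<bar>x k - y k\<bar> \<le> \<delta> * \<bar>segprod a 0 n\<bar> * inv_segprod_sum a n k / \<bar>1 - \<bar>segprod a 0 n\<bar>\<bar>)"
proof (cases "\<bar>segprod a 0 n\<bar> < 1")
  case True
  then show ?thesis using recurrence_stable_contracting[OF per nz True defect] by simp
next
  case False
  with E have "\<bar>segprod a 0 n\<bar> > 1" by simp
  then show ?thesis using recurrence_stable_expanding[OF n per nz _ defect] by simp
qed

definition dlt_op :: "real \<Rightarrow> (nat \<Rightarrow> real) \<Rightarrow> (nat \<Rightarrow> real) \<Rightarrow> nat \<Rightarrow> real" where
  "dlt_op h \<mu> y k = dlt h y k - \<mu> k * y k"

lemma dlt_op_recurrence: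
  "h \<noteq> 0 \<Longrightarrow> h * dlt_op h \<mu> y k = y (Suc k) - (1 + h * \<mu> k) * y k"
  by (simp add: dlt_op_def dlt_def field_simps)

lemma dlt3_factorization:
  assumes "h \<noteq> 0"
    and "\<And>k. p k = - lam (k + 2)"
    and "\<And>k. q k = dlt h lam (k + 1) - lam (k + 1) * lam (k + 2)"
    and "\<And>k. r k = dlt h (dlt h lam) k - lam (k + 1) * dlt h lam (k + 1)
                  - (lam (k + 1) + lam (k + 2)) * dlt h lam k + lam k * lam (k + 1) * lam (k + 2)"
  shows "dlt h (dlt h (dlt h y)) k + p k * dlt h (dlt h y) k + q k * dlt h y k + r k * y k
    = dlt_op h (\<lambda>k. lam (k + 2)) (dlt_op h (\<lambda>k. lam (k + 1)) (dlt_op h (\<lambda>k. - lam k) y)) k"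
  unfolding assms(2-4) using assms(1) by (simp add: dlt_op_def dlt_def field_simps numeral_2_eq_2)

definition hu_stable_every_rhs :: "((nat \<Rightarrow> real) \<Rightarrow> nat \<Rightarrow> real) \<Rightarrow> real \<Rightarrow> bool" where
  "hu_stable_every_rhs L K \<longleftrightarrow>
     (\<forall>\<epsilon> f \<xi>. (\<forall>k. \<bar>L \<xi> k - f k\<bar> \<le> \<epsilon>) \<longrightarrow>
        (\<exists>y. (\<forall>k. L y k = f k) \<and> (\<forall>k. \<bar>\<xi> k - y k\<bar> \<le> K * \<epsilon>)))"

lemma hu_stable_every_rhs_comp:
  assumes L1: "hu_stable_every_rhs L1 K1" and L2: "hu_stable_every_rhs L2 K2"
  shows "hu_stable_every_rhs (\<lambda>y. L2 (L1 y)) (K1 * K2)"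
  unfolding hu_stable_every_rhs_def
proof (intro allI impI)
  fix \<epsilon> f \<xi> assume "\<forall>k. \<bar>L2 (L1 \<xi>) k - f k\<bar> \<le> \<epsilon>"
  then obtain y2 where y2: "\<forall>k. L2 y2 k = f k" and close2: "\<forall>k. \<bar>L1 \<xi> k - y2 k\<bar> \<le> K2 * \<epsilon>"
    using L2 unfolding hu_stable_every_rhs_def by blast
  then obtain y where "\<forall>k. L1 y k = y2 k" and "\<forall>k. \<bar>\<xi> k - y k\<bar> \<le> K1 * (K2 * \<epsilon>)"
    using L1 unfolding hu_stable_every_rhs_def by blast
  moreover from this(1) have "L1 y = y2" by blast
  ultimately show "\<exists>y. (\<forall>k. L2 (L1 y) k = f k) \<and> (\<forall>k. \<bar>\<xi> k - y k\<bar> \<le> K1 * K2 * \<epsilon>)"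
    using y2 by (auto simp: mult.assoc)
qed

lemma hu_stable_if_every_rhs:
  "hu_stable_every_rhs L K \<Longrightarrow> K > 0 \<Longrightarrow> hu_stable L f K"
  unfolding hu_stable_every_rhs_def hu_stable_def by blast

primrec lin_rec_sol :: "(nat \<Rightarrow> real) \<Rightarrow> (nat \<Rightarrow> real) \<Rightarrow> nat \<Rightarrow> real" where
  "lin_rec_sol a b 0 = 0"
| "lin_rec_sol a b (Suc k) = a k * lin_rec_sol a b k + b k"

lemma dexp_eq_segprod: "dexp h \<mu> n = segprod (\<lambda>k. 1 + h * \<mu> k) 0 n"
  by (simp add: dexp_def segprod_def)

lemma Sk_mod_eq:
  assumes "\<And>k. \<mu> (k + n) = \<mu> k"
  shows "Sk h n \<mu> (k mod n) = inv_segprod_sum (\<lambda>k. 1 + h * \<mu> k) n k"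
proof -
  have "\<mu> ((k mod n + i) mod n) = \<mu> (k + i)" for i
    using periodic_mod[of \<mu> n "k + i", OF assms] by (simp add: mod_add_left_eq)
  then have "Sk h n \<mu> (k mod n) = (\<Sum>j=1..n. 1 / \<bar>segprod (\<lambda>k. 1 + h * \<mu> k) k j\<bar>)"
    unfolding Sk_def segprod_def by (simp add: abs_prod prod_dividef)
  also have "\<dots> = inv_segprod_sum (\<lambda>k. 1 + h * \<mu> k) n k"
    unfolding inv_segprod_sum_def by (induction n) simp_all
  finally show ?thesis .
qed

lemma Sk_image:
  assumes "n \<ge> 1" and "\<And>k. \<mu> (k + n) = \<mu> k"
  shows "Sk h n \<mu> ` {..<n} = range (inv_segprod_sum (\<lambda>k. 1 + h * \<mu> k) n)"
proof -
  have "Sk h n \<mu> ` {..<n} = range (\<lambda>k. Sk h n \<mu> (k mod n))"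
  proof (intro equalityI image_subsetI)
    fix j assume "j \<in> {..<n}"
    then have "Sk h n \<mu> j = Sk h n \<mu> (j mod n)" by simp
    then show "Sk h n \<mu> j \<in> range (\<lambda>k. Sk h n \<mu> (k mod n))" by blast
  next
    fix k show "Sk h n \<mu> (k mod n) \<in> Sk h n \<mu> ` {..<n}" using assms(1) by simp
  qed
  then show ?thesis using Sk_mod_eq[where \<mu>=\<mu> and n=n and h=h, OF assms(2)] by simp
qed

lemma K0_eq_segprod:
  fixes h :: real
  assumes "n \<ge> 1" and "\<And>k. \<mu> (k + n) = \<mu> k"
  defines "a \<equiv> \<lambda>k. 1 + h * \<mu> k"
  shows "K0 h n \<mu> = h * \<bar>segprod a 0 n\<bar> / \<bar>1 - \<bar>segprod a 0 n\<bar>\<bar> * Max (range (inv_segprod_sum a n))"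
  unfolding K0_def dexp_eq_segprod Sk_image[where \<mu>=\<mu> and n=n, OF assms(1,2)] a_def ..

lemma finite_range_inv_segprod_sum:
  assumes "n \<ge> 1" and "\<And>k. a (k + n) = a k"
  shows "finite (range (inv_segprod_sum a n))"
proof -
  have "inv_segprod_sum a n k \<in> inv_segprod_sum a n ` {..<n}" for k
  proof -
    have "inv_segprod_sum a n k = inv_segprod_sum a n (k mod n)"
      by (rule periodic_mod) (rule inv_segprod_sum_periodic[where a=a, OF assms(2)])
    moreover have "k mod n < n" using assms(1) by simp
    ultimately show ?thesis by blast
  qed
  then have "range (inv_segprod_sum a n) \<subseteq> inv_segprod_sum a n ` {..<n}" by blast
  then show ?thesis by (rule finite_subset) simp
qed

lemma hu_stable_every_rhs_dlt_op:
  assumes h: "h > 0" and n: "n \<ge> 1" and per: "\<And>k. \<mu> (k + n) = \<mu> k"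
    and nz: "\<And>k. 1 + h * \<mu> k \<noteq> 0" and E: "\<bar>dexp h \<mu> n\<bar> \<noteq> 1"
  shows "hu_stable_every_rhs (dlt_op h \<mu>) (K0 h n \<mu>)"
  unfolding hu_stable_every_rhs_def
proof (intro allI impI)
  fix \<epsilon> f \<xi> assume defect: "\<forall>k. \<bar>dlt_op h \<mu> \<xi> k - f k\<bar> \<le> \<epsilon>"
  define a where "a k = 1 + h * \<mu> k" for k
  have per_a: "a (k + n) = a k" for k using per by (simp add: a_def)
  have nz_a: "a k \<noteq> 0" for k using nz by (simp add: a_def)
  define E where "E = \<bar>segprod a 0 n\<bar>"
  define w where "w = lin_rec_sol a (\<lambda>k. h * f k)"
  define x where "x k = \<xi> k - w k" for k
  have "\<bar>x (Suc k) - a k * x k\<bar> \<le> h * \<epsilon>" for k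
  proof -
    have "x (Suc k) - a k * x k = h * (dlt_op h \<mu> \<xi> k - f k)"
      using dlt_op_recurrence[of h \<mu> \<xi> k] h by (simp add: x_def w_def a_def algebra_simps)
    then show ?thesis using defect h by (simp add: abs_mult)
  qed
  with recurrence_stable[where a=a and n=n, OF n per_a nz_a] E
  obtain y0 where y0: "\<And>k. y0 (Suc k) = a k * y0 k"
    and close: "\<And>k. \<bar>x k - y0 k\<bar> \<le> h * \<epsilon> * E * inv_segprod_sum a n k / \<bar>1 - E\<bar>"
    unfolding E_def dexp_eq_segprod a_def by blast
  define y where "y k = w k + y0 k" for k
  have "dlt_op h \<mu> y k = f k" for k
  proof -
    have "h * dlt_op h \<mu> y k = h * f k"
      using dlt_op_recurrence[of h \<mu> y k] h y0[of k] by (simp add: y_def w_def a_def algebra_simps)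
    then show ?thesis using h by simp
  qed
  moreover have "\<bar>\<xi> k - y k\<bar> \<le> K0 h n \<mu> * \<epsilon>" for k
  proof -
    have "\<epsilon> \<ge> 0" using defect by (meson abs_ge_zero order_trans)
    have "\<bar>\<xi> k - y k\<bar> \<le> (h * E / \<bar>1 - E\<bar>) * inv_segprod_sum a n k * \<epsilon>"
      using close[of k] by (simp add: x_def y_def field_simps)
    also have "\<dots> \<le> (h * E / \<bar>1 - E\<bar>) * Max (range (inv_segprod_sum a n)) * \<epsilon>"
      using finite_range_inv_segprod_sum[where a=a, OF n per_a] h \<open>\<epsilon> \<ge> 0\<close>
      by (intro mult_right_mono mult_left_mono Max_ge) (auto simp: E_def)
    also have "\<dots> = K0 h n \<mu> * \<epsilon>"
      unfolding K0_eq_segprod[where \<mu>=\<mu> and n=n, OF n per] E_def a_def ..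
    finally show ?thesis .
  qed
  ultimately show "\<exists>y. (\<forall>k. dlt_op h \<mu> y k = f k) \<and> (\<forall>k. \<bar>\<xi> k - y k\<bar> \<le> K0 h n \<mu> * \<epsilon>)"
    by blast
qed

lemma K0_shift:
  assumes n: "n \<ge> 1" and per: "\<And>k. \<mu> (k + n) = \<mu> k" and nz: "\<And>k. 1 + h * \<mu> k \<noteq> 0"
  shows "dexp h (\<lambda>k. \<mu> (k + s)) n = dexp h \<mu> n" and "K0 h n (\<lambda>k. \<mu> (k + s)) = K0 h n \<mu>"
proof -
  define a where "a = (\<lambda>k. 1 + h * \<mu> k)"
  have per_a: "a (k + n) = a k" for k using per by (simp add: a_def)
  have nz_a: "a k \<noteq> 0" for k using nz by (simp add: a_def)
  have per_s: "\<mu> (k + n + s) = \<mu> (k + s)" for k using per[of "k + s"] by (simp add: ac_simps)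
  have seg: "segprod (\<lambda>k. 1 + h * \<mu> (k + s)) k m = segprod a (k + s) m" for k m
    by (simp add: segprod_def a_def ac_simps)
  show dexp: "dexp h (\<lambda>k. \<mu> (k + s)) n = dexp h \<mu> n"
    unfolding dexp_eq_segprod seg using segprod_period[where a=a and n=n, OF per_a nz_a, of s]
    by (simp add: a_def)
  have "range (inv_segprod_sum (\<lambda>k. 1 + h * \<mu> (k + s)) n) = range (\<lambda>k. inv_segprod_sum a n (k + s))"
    by (simp add: inv_segprod_sum_def seg)
  also have "\<dots> = range (inv_segprod_sum a n)"
    by (rule range_periodic_shift[where S="inv_segprod_sum a n", OF n inv_segprod_sum_periodic[where a=a, OF per_a]])
  finally show "K0 h n (\<lambda>k. \<mu> (k + s)) = K0 h n \<mu>"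
    using dexp unfolding K0_eq_segprod[where \<mu>=\<mu> and n=n, OF n per]
      K0_eq_segprod[where \<mu>="\<lambda>k. \<mu> (k + s)" and n=n, OF n per_s] dexp_eq_segprod a_def
    by simp
qed

lemma K0_pos:
  assumes "h > 0" and "n \<ge> 1" and "\<And>k. 1 + h * \<mu> k \<noteq> 0"
    and "0 < \<bar>dexp h \<mu> n\<bar>" and "\<bar>dexp h \<mu> n\<bar> \<noteq> 1"
  shows "K0 h n \<mu> > 0"
proof -
  have "0 < Sk h n \<mu> 0" unfolding Sk_def
    by (rule sum_pos) (use assms in \<open>auto intro!: prod_pos\<close>)
  also have "Sk h n \<mu> 0 \<le> Max (Sk h n \<mu> ` {..<n})" using assms(2) by (intro Max_ge) auto
  finally show ?thesis unfolding K0_def using assms by simp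
qed

theorem theorem5p5:
  fixes h :: real and n :: nat and lam p q r :: "nat \<Rightarrow> real"
  assumes hpos: "h > 0"
    and cyc: "is_cycle n lam"
    and nonsing: "\<And>k. lam k \<noteq> 1 / h \<and> lam k \<noteq> - 1 / h"
    and e1: "0 < \<bar>dexp h lam n\<bar>" "\<bar>dexp h lam n\<bar> \<noteq> 1"
    and e2: "0 < \<bar>dexp h (\<lambda>k. - lam k) n\<bar>" "\<bar>dexp h (\<lambda>k. - lam k) n\<bar> \<noteq> 1"
    and p_def: "\<And>k. p k = - lam (k + 2)"
    and q_def: "\<And>k. q k = dlt h lam (k + 1) - lam (k + 1) * lam (k + 2)"
    and r_def: "\<And>k. r k = dlt h (dlt h lam) k - lam (k + 1) * dlt h lam (k + 1)
                  - (lam (k + 1) + lam (k + 2)) * dlt h lam k + lam k * lam (k + 1) * lam (k + 2)"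
  shows "hu_stable
           (\<lambda>y k. dlt h (dlt h (dlt h y)) k + p k * dlt h (dlt h y) k + q k * dlt h y k + r k * y k)
           (\<lambda>k. 0)
           ((K0 h n lam)\<^sup>2 * K0 h n (\<lambda>k. - lam k))"
proof -
  from cyc have n: "n \<ge> 1" and per: "\<And>k. lam (k + n) = lam k" by (auto simp: is_cycle_def)
  have nz: "1 + h * lam k \<noteq> 0" and nz_neg: "1 + h * - lam k \<noteq> 0" for k
    using nonsing[of k] hpos by (auto simp: field_simps)
  have shifted: "hu_stable_every_rhs (dlt_op h (\<lambda>k. lam (k + s))) (K0 h n lam)" for s
    using hu_stable_every_rhs_dlt_op[OF hpos n _ _, of "\<lambda>k. lam (k + s)"] per[of "_ + s"]
      nz K0_shift[where \<mu>=lam and n=n, OF n per nz] e1 by (simp add: ac_simps)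
  have negated: "hu_stable_every_rhs (dlt_op h (\<lambda>k. - lam k)) (K0 h n (\<lambda>k. - lam k))"
    using hu_stable_every_rhs_dlt_op[OF hpos n _ nz_neg e2(2)] per by simp
  have "hu_stable_every_rhs
          (\<lambda>y. dlt_op h (\<lambda>k. lam (k + 2)) (dlt_op h (\<lambda>k. lam (k + 1)) (dlt_op h (\<lambda>k. - lam k) y)))
          (K0 h n (\<lambda>k. - lam k) * K0 h n lam * K0 h n lam)"
    by (intro hu_stable_every_rhs_comp[OF hu_stable_every_rhs_comp[OF negated]] shifted)
  moreover have "K0 h n lam > 0" and "K0 h n (\<lambda>k. - lam k) > 0"
    using K0_pos[OF hpos n] nz nz_neg e1 e2 by auto
  ultimately show ?thesis
    using dlt3_factorization[OF _ p_def q_def r_def] hpos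
    by (intro hu_stable_if_every_rhs) (simp_all add: power2_eq_square ac_simps)
qed

end
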